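(* Let $d\ge5$ and let $q_1,\ldots,q_d$ be real numbers with $|q_i|\ge e^e$, of which $r\ge1$ are positive and $s\ge1$ negative, $r+s=d$. With $P$, $q_0$, $q$, $|Q|$, $S_j$ as defined below, $$\int_{(8dP)^{-1}q^{-1/2}}^{(8dP)^{-1}q_0^{-1/2}} |S_1(\alpha)\cdots S_d(\alpha)|\,\mathrm{d}\alpha \le C\, q^{1/2}|Q|^{-1/2} P^{d-3}\log P,$$ where $C$ depends only on $d$.
   Context: Notation: $e(x)=\exp(2\pi i x)$; $q_0 = \min_j|q_j|$, $q = \max_j|q_j|$, $|Q| = \prod_{j=1}^d|q_j|$; $S_j(\alpha) = \sum_{m\in\mathbb{Z},\ P < |q_j|^{1/2} m < 2dP} e(\alpha q_j m^2)$. The parameter $P$ is $P = \exp\{(1 + \tfrac{10 d^2}{\log\log H})\log H\}$ with $H = C_d\, q^{\frac12+\beta}$, $C_d\ge1$ a constant depending on $d$, and $\beta$ given, with $r'=\max(r,s)$, $s'=\min(r,s)$, by $\beta = \frac{r'}{2s'}$ if $r'\ge s'+3$, $\beta=\frac{s'+2}{2(s'-1)}$ if $r'\in\{s'+1,s'+2\}$, $\beta = \frac{s'+1}{2(s'-2)}$ if $r'=s'$. *)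

theory Defs
  imports "HOL-Analysis.Analysis"
begin

definition ee :: "real \<Rightarrow> complex" where
  "ee x = exp (2 * of_real pi * \<i> * of_real x)"

definition beta_exp :: "nat \<Rightarrow> nat \<Rightarrow> real" where
  "beta_exp r s = (let r' = max r s; s' = min r s in
     if r' \<ge> s' + 3 then real r' / (2 * real s')
     else if r' = s' + 1 \<or> r' = s' + 2 then (real s' + 2) / (2 * (real s' - 1))
     else (real s' + 1) / (2 * (real s' - 2)))"

definition Hpar :: "real \<Rightarrow> real \<Rightarrow> real \<Rightarrow> real" where
  "Hpar Cd qmax beta = Cd * qmax powr (1/2 + beta)"

definition Ppar :: "nat \<Rightarrow> real \<Rightarrow> real" where
  "Ppar d H = exp ((1 + 10 * real d ^ 2 / ln (ln H)) * ln H)"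

definition Sexp :: "nat \<Rightarrow> real \<Rightarrow> real \<Rightarrow> real \<Rightarrow> complex" where
  "Sexp d P qj \<alpha> =
     (\<Sum>m\<in>{m::int. P < sqrt \<bar>qj\<bar> * of_int m \<and> sqrt \<bar>qj\<bar> * of_int m < 2 * real d * P}.
        ee (\<alpha> * qj * of_int m ^ 2))"

end

theory Submission
  imports Defs
begin

(* For alpha in the range of integration pick j0 with |q_j0| = q0 minimal and two further
   indices b, c. The Kusmin-Landau inequality (summation by parts against the cotangent form
   of 1 / (e(x) - 1)) gives |S_j0(alpha)| <= (alpha P sqrt q0)^-1; the other d - 3 sums are
   bounded trivially by 2dP / sqrt |q_j|, and AM-GM gives
   |S_b S_c| <= (|q_b| |S_b|^2 + |q_c| |S_c|^2) / (2 sqrt |q_b q_c|).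
   This leaves the weighted mean squares of |S_j(alpha)|^2 / alpha over the interval. Expanding
   the square, the diagonal contributes N log(alpha2 / alpha1) <= N log P, and each off-diagonal
   term is an oscillatory integral of cos(2 pi lambda t) / t of size O(1 / (|lambda| alpha1)),
   with lambda proportional to m^2 - m'^2; summing over pairs costs only a harmonic sum,
   i.e. a factor log N. *)

lemma ee_add: "ee (x + y) = ee x * ee y"
  unfolding ee_def by (simp add: distrib_left exp_add)

lemma ee_conv_cis: "ee x = cis (2 * pi * x)"
  unfolding ee_def cis_conv_exp by (simp add: mult_ac)

lemma norm_ee [simp]: "norm (ee x) = 1"
  by (simp add: ee_conv_cis)

lemma cnj_ee: "cnj (ee x) = ee (- x)"
  by (simp add: ee_conv_cis cis_cnj)

lemma inverse_ee_minus_one: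
  assumes "0 < x" "x < 1"
  shows "inverse (ee x - 1) = - (1 + \<i> * cot (pi * x)) / 2"
proof (rule inverse_unique)
  define u where "u = pi * x"
  have sin_u: "sin u \<noteq> 0" using assms sin_gt_zero[of u] by (auto simp: u_def)
  have ee_x: "ee x - 1 = 2 * \<i> * sin u * cis u"
    using cos_double_sin[of u] sin_double[of u]
    by (simp add: ee_conv_cis u_def mult_ac complex_eq_iff power2_eq_square algebra_simps)
  have cot_u: "1 + \<i> * cot (pi * x) = \<i> * inverse (cis u) / sin u"
    using sin_u by (simp add: u_def cot_def complex_eq_iff)
  show "(ee x - 1) * (- (1 + \<i> * cot (pi * x)) / 2) = 1"
    unfolding ee_x cot_u using sin_u by (simp add: field_simps del: cis_inverse)
qed

lemma ee_eq_cot_mul_diff: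
  assumes "0 < D" "D < 1"
  shows "ee x = - (1 + \<i> * cot (pi * D)) / 2 * (ee (x + D) - ee x)"
proof -
  note inv = inverse_ee_minus_one[OF assms]
  then have "ee D - 1 \<noteq> 0" by (auto simp: complex_eq_iff)
  then show ?thesis unfolding inv[symmetric] by (simp add: ee_add field_simps)
qed

lemma tan_ge_self:
  assumes "0 \<le> x" "x < pi / 2"
  shows "x \<le> tan x"
  using arctan_le_self[of "tan x"] arctan_tan[of x] tan_pos_pi2_le[OF assms] assms by simp

lemma cot_le_inverse:
  assumes "0 < x" "x \<le> pi / 2"
  shows "cot x \<le> 1 / x"
proof (cases "x = pi / 2")
  case False
  then have "x \<le> tan x" "0 < tan x" using assms tan_ge_self tan_gt_zero by auto
  then show ?thesis using assms by (simp add: cot_altdef field_simps)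
next
  case True
  then have "cos x = 0" by (simp only: cos_pi_half)
  then show ?thesis using assms by (simp add: cot_def)
qed

lemma cot_antimono:
  assumes "0 < x" "x \<le> y" "y < pi"
  shows "cot y \<le> cot x"
proof -
  have "sin x > 0" "sin y > 0" using assms sin_gt_zero[of x] sin_gt_zero[of y] by auto
  moreover have "sin (y - x) \<ge> 0" using assms sin_ge_zero[of "y - x"] by auto
  ultimately show ?thesis by (simp add: cot_def sin_diff field_simps)
qed

lemma cot_nonneg:
  assumes "0 < x" "x \<le> pi / 2"
  shows "0 \<le> cot x"
  using assms sin_gt_zero[of x] cos_ge_zero[of x] by (simp add: cot_def)

lemma two_plus_cot_pi_le:
  assumes "0 < x" "x \<le> 1 / 2"
  shows "2 + 3 / 2 * cot (pi * x) \<le> 1 + 1 / x"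
proof -
  have "cot (pi * x) \<le> 1 / (pi * x)" using assms by (intro cot_le_inverse) auto
  also have "\<dots> \<le> 1 / (3 * x)" using assms pi_gt3 by (intro divide_left_mono mult_right_mono) auto
  finally have "3 / 2 * cot (pi * x) \<le> 1 / (2 * x)" by simp
  moreover have "1 \<le> 1 / (2 * x)" using assms by simp
  ultimately show ?thesis by simp
qed

lemma sum_by_parts:
  fixes g z :: "nat \<Rightarrow> 'a::comm_ring"
  shows "(\<Sum>k<Suc m. g k * (z (Suc k) - z k))
           = g m * z (Suc m) - g 0 * z 0 - (\<Sum>k\<in>{1..m}. (g k - g (k - 1)) * z k)"
  by (induction m) (simp_all add: algebra_simps)

lemma norm_sum_by_parts_cot_le:
  fixes z :: "nat \<Rightarrow> complex" and c :: "nat \<Rightarrow> real"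
  assumes norm_z: "\<And>k. norm (z k) = 1"
    and c_nonneg: "\<And>k. k \<le> m \<Longrightarrow> 0 \<le> c k"
    and c_antimono: "\<And>j k. j \<le> k \<Longrightarrow> k \<le> m \<Longrightarrow> c k \<le> c j"
  shows "norm (\<Sum>k<Suc m. - (1 + \<i> * c k) / 2 * (z (Suc k) - z k)) \<le> 1 + 3 / 2 * c 0"
proof -
  define g where "g k = - (1 + \<i> * c k) / 2" for k
  have norm_g: "norm (g k) \<le> (1 + c 0) / 2" if "k \<le> m" for k
  proof -
    have "norm (g k) = norm (1 + \<i> * c k) / 2"
      unfolding g_def norm_divide norm_minus_cancel by simp
    also have "norm (1 + \<i> * c k) \<le> 1 + c k"
      using norm_triangle_ineq[of 1 "\<i> * c k"] c_nonneg[OF that] by (simp add: norm_mult)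
    finally show ?thesis using c_antimono[of 0 k] that by simp
  qed
  have norm_dg: "norm ((g k - g (k - 1)) * z k) = (c (k - 1) - c k) / 2" if "k \<in> {1..m}" for k
  proof -
    have "g k - g (k - 1) = - \<i> * of_real ((c k - c (k - 1)) / 2)"
      by (simp add: g_def field_simps)
    then have "norm ((g k - g (k - 1)) * z k) = \<bar>(c k - c (k - 1)) / 2\<bar>"
      by (simp only: norm_mult norm_minus_cancel norm_ii norm_of_real norm_z mult_1 mult_1_right)
    then show ?thesis using c_antimono[of "k - 1" k] that by simp
  qed
  have "norm (\<Sum>k<Suc m. g k * (z (Suc k) - z k))
      \<le> norm (g m * z (Suc m)) + norm (g 0 * z 0) + norm (\<Sum>k\<in>{1..m}. (g k - g (k - 1)) * z k)"
    unfolding sum_by_parts by (rule order_trans[OF norm_triangle_ineq4 add_right_mono[OF norm_triangle_ineq4]])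
  also have "\<dots> \<le> (1 + c 0) / 2 + (1 + c 0) / 2 + (\<Sum>k\<in>{1..m}. (c (k - 1) - c k) / 2)"
  proof (intro add_mono)
    show "norm (g m * z (Suc m)) \<le> (1 + c 0) / 2" "norm (g 0 * z 0) \<le> (1 + c 0) / 2"
      using norm_g[of m] norm_g[of 0] by (simp_all add: norm_mult norm_z)
    have "norm (\<Sum>k\<in>{1..m}. (g k - g (k - 1)) * z k) \<le> (\<Sum>k\<in>{1..m}. norm ((g k - g (k - 1)) * z k))"
      by (rule norm_sum)
    also have "\<dots> = (\<Sum>k\<in>{1..m}. (c (k - 1) - c k) / 2)"
      by (rule sum.cong[OF refl norm_dg])
    finally show "norm (\<Sum>k\<in>{1..m}. (g k - g (k - 1)) * z k) \<le> (\<Sum>k\<in>{1..m}. (c (k - 1) - c k) / 2)" .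
  qed
  also have "(\<Sum>k\<in>{1..m}. (c (k - 1) - c k) / 2) = (c 0 - c m) / 2"
    using sum_telescope''[of 0 m c] by (simp add: sum_divide_distrib[symmetric] sum_subtractf)
  finally have "norm (\<Sum>k<Suc m. g k * (z (Suc k) - z k)) \<le> 1 + c 0 + (c 0 - c m) / 2"
    by simp
  then have "norm (\<Sum>k<Suc m. g k * (z (Suc k) - z k)) \<le> 1 + 3 / 2 * c 0"
    using c_nonneg[OF order.refl] by (simp add: field_simps)
  then show ?thesis by (simp only: g_def)
qed

lemma kusmin_landau:
  fixes f :: "nat \<Rightarrow> real"
  assumes pos: "0 < f 1 - f 0"
    and mono: "\<And>j k. j \<le> k \<Longrightarrow> k < m \<Longrightarrow> f (Suc j) - f j \<le> f (Suc k) - f k"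
    and half: "\<And>k. k < m \<Longrightarrow> f (Suc k) - f k \<le> 1 / 2"
  shows "norm (\<Sum>k\<le>m. ee (f k)) \<le> 1 + 1 / (f 1 - f 0)"
proof (cases m)
  case 0
  then show ?thesis using pos by simp
next
  case (Suc m')
  define D where "D k = f (Suc k) - f k" for k
  define c where "c k = cot (pi * D k)" for k
  have D_pos: "0 < D k" and D_half: "D k \<le> 1 / 2" if "k \<le> m'" for k
    using pos mono[of 0 k] half[of k] that Suc by (simp_all add: D_def)
  have c_nonneg: "0 \<le> c k" if "k \<le> m'" for k
    unfolding c_def using D_pos[OF that] D_half[OF that] by (intro cot_nonneg) auto
  have c_antimono: "c k \<le> c j" if "j \<le> k" "k \<le> m'" for j k
    unfolding c_def using D_pos[of j] D_half[of k] mono[of j k] that Suc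
    by (intro cot_antimono) (auto simp: D_def)
  \<comment> \<open>summation by parts now only sees the variation of the monotone cotangents\<close>
  have ee_step: "ee (f k) = - (1 + \<i> * c k) / 2 * (ee (f (Suc k)) - ee (f k))" if "k \<le> m'" for k
    using ee_eq_cot_mul_diff[of "D k" "f k"] D_pos[OF that] D_half[OF that] by (simp add: c_def D_def)
  have "(\<Sum>k\<le>m. ee (f k)) = (\<Sum>k<Suc m'. ee (f k)) + ee (f m)"
    using Suc by (simp add: lessThan_Suc_atMost)
  also have "(\<Sum>k<Suc m'. ee (f k)) = (\<Sum>k<Suc m'. - (1 + \<i> * c k) / 2 * (ee (f (Suc k)) - ee (f k)))"
    by (intro sum.cong refl ee_step) simp
  finally have split: "(\<Sum>k\<le>m. ee (f k))
      = (\<Sum>k<Suc m'. - (1 + \<i> * c k) / 2 * (ee (f (Suc k)) - ee (f k))) + ee (f m)" .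
  have "norm (\<Sum>k\<le>m. ee (f k))
      \<le> norm (\<Sum>k<Suc m'. - (1 + \<i> * c k) / 2 * (ee (f (Suc k)) - ee (f k))) + norm (ee (f m))"
    unfolding split by (rule norm_triangle_ineq)
  also have "\<dots> \<le> 2 + 3 / 2 * c 0"
    using norm_sum_by_parts_cot_le[of "\<lambda>k. ee (f k)" m' c] c_nonneg c_antimono by simp
  also have "\<dots> \<le> 1 + 1 / D 0"
    unfolding c_def using D_pos[of 0] D_half[of 0] by (intro two_plus_cot_pi_le) auto
  finally show ?thesis by (simp add: D_def)
qed

lemma norm_sum_ee_quadratic_le:
  fixes \<theta> L :: real and n :: nat
  assumes "0 < \<theta>" "1 \<le> L" "\<theta> * (2 * (L + real n) - 3) \<le> 1 / 2"
  shows "norm (\<Sum>k<n. ee (\<theta> * (L + real k)\<^sup>2)) \<le> 1 / (\<theta> * L)"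
proof (cases n)
  case 0
  then show ?thesis using assms by simp
next
  case (Suc m)
  define f where "f k = \<theta> * (L + real k)\<^sup>2" for k
  have D: "f (Suc k) - f k = \<theta> * (2 * (L + real k) + 1)" for k
    by (simp add: f_def power2_eq_square algebra_simps)
  have "norm (\<Sum>k\<le>m. ee (f k)) \<le> 1 + 1 / (f 1 - f 0)"
  proof (rule kusmin_landau)
    show "0 < f 1 - f 0" using D[of 0] assms by simp
    show "f (Suc j) - f j \<le> f (Suc k) - f k" if "j \<le> k" for j k
      unfolding D using assms that by (intro mult_left_mono) auto
    show "f (Suc k) - f k \<le> 1 / 2" if "k < m" for k
    proof -
      have "f (Suc k) - f k \<le> \<theta> * (2 * (L + real n) - 3)"
        unfolding D using assms that Suc by (intro mult_left_mono) auto
      then show ?thesis using assms(3) by linarith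
    qed
  qed
  also have "\<dots> = 1 + 1 / (\<theta> * (2 * L + 1))"
    using D[of 0] by simp
  also have "\<dots> \<le> 1 / (\<theta> * L)"
  proof -
    have "\<theta> \<le> \<theta> * L" "0 \<le> \<theta> * real m" using assms by simp_all
    moreover have "\<theta> * (2 * (L + real n) - 3) = 2 * (\<theta> * L) + 2 * (\<theta> * real m) - \<theta>"
      using Suc by (simp add: algebra_simps)
    ultimately have "2 * (\<theta> * L) \<le> 1" using assms(3) by linarith
    then have "1 \<le> 1 / (2 * (\<theta> * L))" using assms by simp
    moreover have "1 / (\<theta> * (2 * L + 1)) \<le> 1 / (2 * (\<theta> * L))"
      using assms by (intro frac_le) (auto simp: algebra_simps)
    ultimately have "1 + 1 / (\<theta> * (2 * L + 1)) \<le> 1 / (2 * (\<theta> * L)) + 1 / (2 * (\<theta> * L))"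
      by (rule add_mono)
    also have "\<dots> = 1 / (\<theta> * L)" by simp
    finally show ?thesis .
  qed
  finally show ?thesis using Suc by (simp add: f_def lessThan_Suc_atMost)
qed

lemma norm_sum_ee_squared:
  fixes x :: "'i \<Rightarrow> real"
  shows "(norm (\<Sum>m\<in>M. ee (x m)))\<^sup>2 = (\<Sum>m\<in>M. \<Sum>m'\<in>M. cos (2 * pi * (x m - x m')))"
proof -
  have "(norm (\<Sum>m\<in>M. ee (x m)))\<^sup>2 = (\<Sum>m\<in>M. cos (2 * pi * x m))\<^sup>2 + (\<Sum>m\<in>M. sin (2 * pi * x m))\<^sup>2"
    by (simp add: cmod_power2 ee_conv_cis Im_sum)
  also have "\<dots> = (\<Sum>m\<in>M. \<Sum>m'\<in>M. cos (2 * pi * x m) * cos (2 * pi * x m') + sin (2 * pi * x m) * sin (2 * pi * x m'))"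
    by (simp add: power2_eq_square sum_product sum.distrib)
  also have "\<dots> = (\<Sum>m\<in>M. \<Sum>m'\<in>M. cos (2 * pi * (x m - x m')))"
    by (simp add: cos_diff right_diff_distrib)
  finally show ?thesis .
qed

lemma has_integral_inverse:
  fixes a b :: real
  assumes "0 < a" "a \<le> b"
  shows "((\<lambda>t. 1 / t) has_integral (ln b - ln a)) {a..b}"
proof (rule fundamental_theorem_of_calculus[OF assms(2)])
  fix t assume "t \<in> {a..b}"
  then have "0 < t" using assms by auto
  then show "(ln has_vector_derivative 1 / t) (at t within {a..b})"
    by (auto intro!: derivative_eq_intros simp flip: has_real_derivative_iff_has_vector_derivative)
qed

lemma has_integral_inverse_square:
  fixes a b :: real
  assumes "0 < a" "a \<le> b"
  shows "((\<lambda>t. 1 / t\<^sup>2) has_integral (1 / a - 1 / b)) {a..b}"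
proof -
  have "((\<lambda>t. 1 / t\<^sup>2) has_integral ((- 1 / b) - (- 1 / a))) {a..b}"
  proof (rule fundamental_theorem_of_calculus[OF assms(2)])
    fix t assume "t \<in> {a..b}"
    then have "0 < t" using assms by auto
    then show "((\<lambda>t. - 1 / t) has_vector_derivative 1 / t\<^sup>2) (at t within {a..b})"
      unfolding has_real_derivative_iff_has_vector_derivative[symmetric]
      by (auto intro!: derivative_eq_intros simp: power2_eq_square)
  qed
  then show ?thesis by simp
qed

lemma abs_integral_cos_div_le:
  fixes a b \<omega> :: real
  assumes "0 < a" "a \<le> b" "\<omega> \<noteq> 0"
  shows "\<bar>integral {a..b} (\<lambda>t. cos (\<omega> * t) / t)\<bar> \<le> 2 / (\<bar>\<omega>\<bar> * a)"
proof -
  define F where "F t = sin (\<omega> * t) / (\<omega> * t)" for t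
  define h where "h t = sin (\<omega> * t) / (\<omega> * t\<^sup>2)" for t
  have F: "((\<lambda>t. cos (\<omega> * t) / t - h t) has_integral (F b - F a)) {a..b}"
  proof (rule fundamental_theorem_of_calculus[OF assms(2)])
    fix t assume "t \<in> {a..b}"
    then have "0 < t" using assms by auto
    then show "(F has_vector_derivative (cos (\<omega> * t) / t - h t)) (at t within {a..b})"
      unfolding F_def h_def has_real_derivative_iff_has_vector_derivative[symmetric] using assms(3)
      by (auto intro!: derivative_eq_intros simp: field_simps power2_eq_square)
  qed
  have h_int: "h integrable_on {a..b}"
    unfolding h_def using assms by (intro integrable_continuous_interval continuous_intros) auto
  have inverse_square: "((\<lambda>t. 1 / \<bar>\<omega>\<bar> * (1 / t\<^sup>2)) has_integral (1 / \<bar>\<omega>\<bar> * (1 / a - 1 / b))) {a..b}"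
    using has_integral_inverse_square[OF assms(1,2)] by (rule has_integral_mult_right)
  have "norm (integral {a..b} h) \<le> integral {a..b} (\<lambda>t. 1 / \<bar>\<omega>\<bar> * (1 / t\<^sup>2))"
  proof (rule integral_norm_bound_integral[OF h_int has_integral_integrable[OF inverse_square]])
    fix t assume "t \<in> {a..b}"
    then have "0 < t" using assms by auto
    then show "norm (h t) \<le> 1 / \<bar>\<omega>\<bar> * (1 / t\<^sup>2)"
      unfolding h_def using assms(3) abs_sin_le_one[of "\<omega> * t"] by (simp add: abs_mult divide_simps)
  qed
  then have "\<bar>integral {a..b} h\<bar> \<le> 1 / \<bar>\<omega>\<bar> * (1 / a - 1 / b)"
    using integral_unique[OF inverse_square] by simp
  moreover have "\<bar>F t\<bar> \<le> 1 / \<bar>\<omega>\<bar> * (1 / t)" if "0 < t" for t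
    unfolding F_def using that assms(3) abs_sin_le_one[of "\<omega> * t"] by (simp add: abs_mult divide_simps)
  moreover have "integral {a..b} (\<lambda>t. cos (\<omega> * t) / t) = F b - F a + integral {a..b} h"
    using integral_unique[OF F] integral_diff[OF _ h_int, of "\<lambda>t. cos (\<omega> * t) / t"] assms
    by (simp add: integrable_continuous_interval continuous_intros)
  ultimately have "\<bar>integral {a..b} (\<lambda>t. cos (\<omega> * t) / t)\<bar>
      \<le> 1 / \<bar>\<omega>\<bar> * (1 / b) + 1 / \<bar>\<omega>\<bar> * (1 / a) + 1 / \<bar>\<omega>\<bar> * (1 / a - 1 / b)"
    using assms by (smt (verit, best))
  also have "\<dots> = 2 / (\<bar>\<omega>\<bar> * a)" using assms by (simp add: field_simps)
  finally show ?thesis .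
qed

lemma harm_le_one_plus_ln: "harm n \<le> 1 + ln (real n)"
proof (cases "n = 0")
  case False
  then show ?thesis using euler_mascheroni_sequence_decreasing[of 1 n] by (simp add: harm_def)
qed (simp add: harm_def)

lemma sum_inverse_dist_le:
  assumes "i < N"
  shows "(\<Sum>j\<in>{..<N} - {i}. 1 / \<bar>real i - real j\<bar>) \<le> 2 * (1 + ln (real N))"
proof -
  have split: "{..<N} - {i} = {..<i} \<union> {Suc i..<N}" using assms by auto
  have "(\<Sum>j\<in>{..<N} - {i}. 1 / \<bar>real i - real j\<bar>)
      = (\<Sum>j<i. 1 / \<bar>real i - real j\<bar>) + (\<Sum>j\<in>{Suc i..<N}. 1 / \<bar>real i - real j\<bar>)"
    unfolding split by (rule sum.union_disjoint) auto
  also have "(\<Sum>j<i. 1 / \<bar>real i - real j\<bar>) = harm i"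
  proof -
    have "(\<Sum>j<i. 1 / \<bar>real i - real j\<bar>) = (\<Sum>j<i. 1 / \<bar>real i - real (i - Suc j)\<bar>)"
      by (rule sum.nat_diff_reindex[symmetric])
    also have "\<dots> = (\<Sum>j<i. inverse (real (Suc j)))"
      by (intro sum.cong refl) (auto simp: of_nat_diff inverse_eq_divide)
    finally show ?thesis by (simp add: harm_altdef)
  qed
  also have "(\<Sum>j\<in>{Suc i..<N}. 1 / \<bar>real i - real j\<bar>) = harm (N - Suc i)"
  proof -
    have "{Suc i..<N} = {0 + Suc i..<(N - Suc i) + Suc i}" using assms by simp
    then have "(\<Sum>j\<in>{Suc i..<N}. 1 / \<bar>real i - real j\<bar>) = (\<Sum>k\<in>{0..<N - Suc i}. 1 / \<bar>real i - real (k + Suc i)\<bar>)"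
      by (simp only: sum.shift_bounds_nat_ivl)
    also have "\<dots> = (\<Sum>k<N - Suc i. inverse (real (Suc k)))"
      by (intro sum.cong) (auto simp: inverse_eq_divide)
    finally show ?thesis by (simp add: harm_altdef)
  qed
  also have "harm i + harm (N - Suc i) \<le> harm N + (harm N :: real)"
    using assms by (intro add_mono harm_mono) auto
  also have "\<dots> \<le> 2 * (1 + ln (real N))" using harm_le_one_plus_ln[of N] by simp
  finally show ?thesis .
qed

lemma integral_cos_diff_squares_le:
  fixes a b c L :: real
  assumes a: "0 < a" "a \<le> b" and c: "c \<noteq> 0" and L: "0 < L" and "i \<noteq> j"
  shows "integral {a..b} (\<lambda>t. cos (2 * pi * (c * ((L + real i)\<^sup>2 - (L + real j)\<^sup>2)) * t) / t)
           \<le> 1 / (2 * pi * L * \<bar>c\<bar> * a) * (1 / \<bar>real i - real j\<bar>)"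
proof -
  define \<omega> where "\<omega> = 2 * pi * (c * ((L + real i)\<^sup>2 - (L + real j)\<^sup>2))"
  have "(L + real i)\<^sup>2 - (L + real j)\<^sup>2 = (real i - real j) * (2 * L + real i + real j)"
    by (simp add: power2_eq_square algebra_simps)
  then have "\<bar>\<omega>\<bar> = (2 * pi * \<bar>c\<bar> * \<bar>real i - real j\<bar>) * (2 * L + real i + real j)"
    using L by (simp add: \<omega>_def abs_mult)
  moreover have "(2 * pi * \<bar>c\<bar> * \<bar>real i - real j\<bar>) * (2 * L)
      \<le> (2 * pi * \<bar>c\<bar> * \<bar>real i - real j\<bar>) * (2 * L + real i + real j)"
    by (intro mult_left_mono) auto
  ultimately have \<omega>_ge: "4 * pi * L * \<bar>c\<bar> * \<bar>real i - real j\<bar> \<le> \<bar>\<omega>\<bar>" by (simp add: mult_ac)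
  have pos: "0 < 4 * pi * L * \<bar>c\<bar> * \<bar>real i - real j\<bar>" using L c assms(5) by simp
  then have "\<omega> \<noteq> 0" using \<omega>_ge by linarith
  then have "integral {a..b} (\<lambda>t. cos (\<omega> * t) / t) \<le> 2 / (\<bar>\<omega>\<bar> * a)"
    using abs_integral_cos_div_le[OF a] abs_le_D1 by blast
  also have "\<dots> \<le> 2 / ((4 * pi * L * \<bar>c\<bar> * \<bar>real i - real j\<bar>) * a)"
    using a \<omega>_ge pos by (intro frac_le mult_right_mono) auto
  also have "\<dots> = 1 / (2 * pi * L * \<bar>c\<bar> * a) * (1 / \<bar>real i - real j\<bar>)" by simp
  finally show ?thesis by (simp add: \<omega>_def)
qed

lemma integral_norm_sum_ee_quadratic_sq_le:
  fixes a b c L :: real and N :: nat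
  assumes a: "0 < a" and ab: "a \<le> b" and c: "c \<noteq> 0" and L: "0 < L"
  shows "integral {a..b} (\<lambda>t. (norm (\<Sum>k<N. ee (t * c * (L + real k)\<^sup>2)))\<^sup>2 / t)
           \<le> N * (ln b - ln a) + N * (1 + ln N) / (pi * L * \<bar>c\<bar> * a)"
proof -
  define I where
    "I i j = integral {a..b} (\<lambda>t. cos (2 * pi * (c * ((L + real i)\<^sup>2 - (L + real j)\<^sup>2)) * t) / t)"
    for i j
  define K where "K = 1 / (2 * pi * L * \<bar>c\<bar> * a)"
  have "(\<lambda>t. (norm (\<Sum>k<N. ee (t * c * (L + real k)\<^sup>2)))\<^sup>2 / t)
      = (\<lambda>t. \<Sum>i<N. \<Sum>j<N. cos (2 * pi * (c * ((L + real i)\<^sup>2 - (L + real j)\<^sup>2)) * t) / t)"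
    by (simp add: norm_sum_ee_squared sum_divide_distrib algebra_simps)
  moreover have "(\<lambda>t. cos (2 * pi * l * t) / t) integrable_on {a..b}" for l
    using a by (intro integrable_continuous_interval continuous_intros) auto
  ultimately have integral_eq: "integral {a..b} (\<lambda>t. (norm (\<Sum>k<N. ee (t * c * (L + real k)\<^sup>2)))\<^sup>2 / t)
      = (\<Sum>i<N. \<Sum>j<N. I i j)"
    by (simp add: I_def integral_sum integrable_sum)
  have row: "(\<Sum>j<N. I i j) \<le> (ln b - ln a) + K * (2 * (1 + ln N))" if "i < N" for i
  proof -
    have "(\<Sum>j<N. I i j) = I i i + (\<Sum>j\<in>{..<N} - {i}. I i j)"
      using that by (subst sum.remove[of _ i]) auto
    also have "I i i = ln b - ln a"
      using has_integral_inverse[OF a ab] by (simp add: I_def integral_unique)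
    also have "(\<Sum>j\<in>{..<N} - {i}. I i j) \<le> (\<Sum>j\<in>{..<N} - {i}. K * (1 / \<bar>real i - real j\<bar>))"
      unfolding I_def K_def using a ab c L by (intro sum_mono integral_cos_diff_squares_le) auto
    also have "\<dots> \<le> K * (2 * (1 + ln N))"
      unfolding sum_distrib_left[symmetric] using sum_inverse_dist_le[OF that] a L
      by (intro mult_left_mono) (auto simp: K_def)
    finally show ?thesis by simp
  qed
  have "(\<Sum>i<N. \<Sum>j<N. I i j) \<le> (\<Sum>i<N. (ln b - ln a) + K * (2 * (1 + ln N)))"
    using row by (intro sum_mono) auto
  also have "\<dots> = N * (ln b - ln a) + N * (1 + ln N) / (pi * L * \<bar>c\<bar> * a)"
    using a L c by (simp add: K_def field_simps)
  finally show ?thesis unfolding integral_eq .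
qed

lemma Sexp_uminus: "Sexp d P (- qj) \<alpha> = cnj (Sexp d P qj \<alpha>)"
  unfolding Sexp_def by (simp add: cnj_ee)

lemma norm_Sexp_abs: "norm (Sexp d P \<bar>qj\<bar> \<alpha>) = norm (Sexp d P qj \<alpha>)"
  by (cases "0 \<le> qj") (simp_all add: Sexp_uminus)

definition Sexp_start :: "real \<Rightarrow> real \<Rightarrow> int" where
  "Sexp_start P qj = \<lfloor>P / sqrt \<bar>qj\<bar>\<rfloor> + 1"

definition Sexp_length :: "nat \<Rightarrow> real \<Rightarrow> real \<Rightarrow> nat" where
  "Sexp_length d P qj = nat (\<lceil>2 * real d * P / sqrt \<bar>qj\<bar>\<rceil> - Sexp_start P qj)"

lemma Sexp_start_gt:
  assumes "qj \<noteq> 0"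
  shows "P < sqrt \<bar>qj\<bar> * Sexp_start P qj"
proof -
  have "P / sqrt \<bar>qj\<bar> < Sexp_start P qj" unfolding Sexp_start_def by linarith
  then show ?thesis using assms by (simp add: pos_divide_less_eq mult.commute)
qed

lemma Sexp_start_ge_one: "0 < P \<Longrightarrow> 1 \<le> Sexp_start P qj"
  unfolding Sexp_start_def by simp

lemma Sexp_index_set:
  assumes "qj \<noteq> 0"
  shows "{m::int. P < sqrt \<bar>qj\<bar> * m \<and> sqrt \<bar>qj\<bar> * m < 2 * real d * P}
       = (\<lambda>k. Sexp_start P qj + int k) ` {..<Sexp_length d P qj}"
proof -
  define s where "s = sqrt \<bar>qj\<bar>"
  have "0 < s" using assms by (simp add: s_def)
  then have lower: "P < s * m \<longleftrightarrow> Sexp_start P qj \<le> m" for m :: int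
    by (simp add: Sexp_start_def s_def mult.commute flip: pos_divide_less_eq floor_less_iff) linarith
  moreover have upper: "s * m < 2 * real d * P \<longleftrightarrow> m < \<lceil>2 * real d * P / s\<rceil>" for m :: int
    using \<open>0 < s\<close> by (simp add: mult.commute less_ceiling_iff pos_less_divide_eq)
  show ?thesis
  proof (intro set_eqI iffI)
    fix m assume "m \<in> {m::int. P < sqrt \<bar>qj\<bar> * m \<and> sqrt \<bar>qj\<bar> * m < 2 * real d * P}"
    then have "Sexp_start P qj \<le> m" "m < \<lceil>2 * real d * P / s\<rceil>"
      using lower upper by (auto simp: s_def)
    then show "m \<in> (\<lambda>k. Sexp_start P qj + int k) ` {..<Sexp_length d P qj}"
      by (auto simp: s_def Sexp_length_def image_iff intro!: bexI[of _ "nat (m - Sexp_start P qj)"])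
  qed (use lower upper in \<open>auto simp: s_def Sexp_length_def\<close>)
qed

lemma Sexp_eq_sum:
  assumes "qj \<noteq> 0"
  shows "Sexp d P qj \<alpha> = (\<Sum>k<Sexp_length d P qj. ee (\<alpha> * qj * (Sexp_start P qj + real k)\<^sup>2))"
proof -
  have "inj_on (\<lambda>k. Sexp_start P qj + int k) {..<Sexp_length d P qj}" by (auto simp: inj_on_def)
  then show ?thesis unfolding Sexp_def Sexp_index_set[OF assms] by (simp add: sum.reindex)
qed

lemma Sexp_term_lt:
  assumes "qj \<noteq> 0" "k < Sexp_length d P qj"
  shows "sqrt \<bar>qj\<bar> * (Sexp_start P qj + real k) < 2 * real d * P"
proof -
  have "Sexp_start P qj + int k \<in> {m::int. P < sqrt \<bar>qj\<bar> * m \<and> sqrt \<bar>qj\<bar> * m < 2 * real d * P}"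
    unfolding Sexp_index_set[OF assms(1)] using assms(2) by auto
  then show ?thesis by simp
qed

lemma Sexp_length_le:
  assumes "qj \<noteq> 0" "sqrt \<bar>qj\<bar> \<le> P"
  shows "real (Sexp_length d P qj) * sqrt \<bar>qj\<bar> \<le> 2 * real d * P"
proof (cases "Sexp_length d P qj")
  case (Suc n)
  have "P < sqrt \<bar>qj\<bar> * Sexp_start P qj" using Sexp_start_gt[OF assms(1)] .
  moreover have "sqrt \<bar>qj\<bar> * (Sexp_start P qj + real n) < 2 * real d * P"
    using Sexp_term_lt[OF assms(1), of n d P] Suc by simp
  ultimately show ?thesis using Suc assms(2) by (simp add: algebra_simps)
next
  case 0
  have "0 \<le> P" using assms(2) real_sqrt_ge_zero[of "\<bar>qj\<bar>"] by linarith
  then show ?thesis using 0 by simp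
qed

lemma norm_Sexp_le_trivial:
  assumes "qj \<noteq> 0" "sqrt \<bar>qj\<bar> \<le> P"
  shows "norm (Sexp d P qj \<alpha>) \<le> 2 * real d * P / sqrt \<bar>qj\<bar>"
proof -
  have "norm (Sexp d P qj \<alpha>)
      \<le> (\<Sum>k<Sexp_length d P qj. norm (ee (\<alpha> * qj * (Sexp_start P qj + real k)\<^sup>2)))"
    unfolding Sexp_eq_sum[OF assms(1)] by (rule norm_sum)
  also have "\<dots> = real (Sexp_length d P qj)" by simp
  also have "\<dots> \<le> 2 * real d * P / sqrt \<bar>qj\<bar>"
    using Sexp_length_le[OF assms] assms(1) by (simp add: pos_le_divide_eq)
  finally show ?thesis .
qed

lemma norm_Sexp_eq_sum_abs:
  assumes "qj \<noteq> 0"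
  shows "norm (Sexp d P qj \<alpha>)
    = norm (\<Sum>k<Sexp_length d P qj. ee ((\<alpha> * \<bar>qj\<bar>) * (Sexp_start P qj + real k)\<^sup>2))"
proof -
  have "Sexp_start P \<bar>qj\<bar> = Sexp_start P qj" "Sexp_length d P \<bar>qj\<bar> = Sexp_length d P qj"
    by (simp_all add: Sexp_start_def Sexp_length_def)
  then show ?thesis
    using Sexp_eq_sum[of "\<bar>qj\<bar>" d P \<alpha>] assms by (simp add: mult.assoc flip: norm_Sexp_abs)
qed

lemma norm_Sexp_le_inverse:
  assumes qj: "qj \<noteq> 0" and P: "0 < P" and \<alpha>: "0 < \<alpha>" "\<alpha> \<le> 1 / (8 * real d * P * sqrt \<bar>qj\<bar>)"
  shows "norm (Sexp d P qj \<alpha>) \<le> 1 / (\<alpha> * P * sqrt \<bar>qj\<bar>)"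
proof -
  define s where "s = sqrt \<bar>qj\<bar>"
  define L where "L = real_of_int (Sexp_start P qj)"
  define N where "N = Sexp_length d P qj"
  have s: "0 < s" "s * s = \<bar>qj\<bar>" using qj by (simp_all add: s_def)
  have L: "P < s * L" "1 \<le> L"
    using Sexp_start_gt[OF qj] Sexp_start_ge_one[OF P] by (simp_all add: L_def s_def)
  have "norm (Sexp d P qj \<alpha>) \<le> 1 / ((\<alpha> * \<bar>qj\<bar>) * L)"
  proof (cases N)
    case (Suc n)
    have "\<alpha> * (8 * real d * P * s) \<le> 1"
      using \<alpha> P s by (cases "d = 0") (simp_all add: s_def le_divide_eq mult.commute)
    moreover have "s * (L + real n) < 2 * real d * P"
      using Sexp_term_lt[OF qj, of n d P] Suc by (simp add: N_def L_def s_def)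
    then have "(\<alpha> * s) * (s * (2 * (L + real N) - 3)) \<le> (\<alpha> * s) * (4 * real d * P)"
      using \<alpha> s Suc by (intro mult_left_mono) (simp_all add: algebra_simps)
    ultimately have "(\<alpha> * \<bar>qj\<bar>) * (2 * (L + real N) - 3) \<le> 1 / 2"
      by (simp add: s(2)[symmetric] algebra_simps)
    then show ?thesis
      unfolding norm_Sexp_eq_sum_abs[OF qj] N_def[symmetric] L_def[symmetric]
      using \<alpha>(1) qj L(2) by (intro norm_sum_ee_quadratic_le) auto
  qed (use \<alpha> L norm_Sexp_eq_sum_abs[OF qj] in \<open>simp add: N_def\<close>)
  also have "\<dots> \<le> 1 / (\<alpha> * P * s)"
  proof (rule frac_le)
    have "(\<alpha> * s) * P \<le> (\<alpha> * s) * (s * L)" using L \<alpha> s by (intro mult_left_mono) auto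
    then show "\<alpha> * P * s \<le> \<alpha> * \<bar>qj\<bar> * L" by (simp add: s(2)[symmetric] mult_ac)
  qed (use \<alpha> P s in simp_all)
  finally show ?thesis by (simp add: s_def)
qed

lemma ln_Sexp_length_le:
  assumes qj: "qj \<noteq> 0" "1 \<le> sqrt \<bar>qj\<bar>" and P: "sqrt \<bar>qj\<bar> \<le> P" "1 \<le> ln P" and d: "1 \<le> d"
  shows "1 + ln (real (Sexp_length d P qj)) \<le> 2 * (1 + real d) * ln P"
proof (cases "Sexp_length d P qj = 0")
  case False
  have "0 < P" using qj P by linarith
  have "real (Sexp_length d P qj) \<le> real (Sexp_length d P qj) * sqrt \<bar>qj\<bar>"
    using qj by (simp add: mult_le_cancel_left1)
  also have "\<dots> \<le> 2 * real d * P" using Sexp_length_le[OF qj(1) P(1)] .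
  finally have "ln (real (Sexp_length d P qj)) \<le> ln (2 * real d * P)"
    using False by (intro ln_mono) auto
  also have "\<dots> = ln (2 * real d) + ln P" using d \<open>0 < P\<close> by (simp add: ln_mult)
  also have "\<dots> \<le> 2 * real d + ln P"
    using d by (simp add: less_imp_le[OF ln_less_self])
  finally have "ln (real (Sexp_length d P qj)) \<le> 2 * real d + ln P" .
  moreover have "real d * 1 \<le> real d * ln P" using P(2) by (intro mult_left_mono) auto
  ultimately show ?thesis using P(2) by (simp add: algebra_simps)
next
  case True
  have "2 * (1 + real d) * 1 \<le> 2 * (1 + real d) * ln P" using P(2) by (intro mult_left_mono) auto
  moreover have "ln (real (Sexp_length d P qj)) = 0" using True by simp
  moreover have "0 \<le> real d" by simp
  ultimately show ?thesis by argo
qed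

(* also for n = 0, since ln 0 = 0 in Isabelle *)
lemma ln_of_nat_nonneg: "0 \<le> ln (real n)"
  by (cases "n = 0") simp_all

lemma Sexp_mean_square_le_length:
  fixes qj P \<alpha>1 \<alpha>2 :: real
  assumes qj: "qj \<noteq> 0" and P: "sqrt \<bar>qj\<bar> \<le> P" and \<alpha>: "0 < \<alpha>1" "\<alpha>1 \<le> \<alpha>2"
  shows "\<bar>qj\<bar> * integral {\<alpha>1..\<alpha>2} (\<lambda>t. (norm (Sexp d P qj t))\<^sup>2 / t)
    \<le> sqrt \<bar>qj\<bar> * (2 * real d * P) * (ln \<alpha>2 - ln \<alpha>1)
      + 2 * real d * P * (1 + ln (Sexp_length d P qj)) / (pi * P * \<alpha>1)"
proof -
  define s where "s = sqrt \<bar>qj\<bar>"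
  define L where "L = real_of_int (Sexp_start P qj)"
  define N where "N = Sexp_length d P qj"
  have s: "0 < s" "s * s = \<bar>qj\<bar>" "s \<le> P" using qj P by (simp_all add: s_def)
  have L: "P < s * L" "0 < L"
    using Sexp_start_gt[OF qj] Sexp_start_ge_one[of P qj] s by (simp_all add: L_def s_def)
  have Ns: "N * s \<le> 2 * real d * P" using Sexp_length_le[OF qj P] by (simp add: N_def s_def)
  have "(\<lambda>t. (norm (Sexp d P qj t))\<^sup>2 / t) = (\<lambda>t. (norm (\<Sum>k<N. ee (t * qj * (L + real k)\<^sup>2)))\<^sup>2 / t)"
    using qj by (simp add: Sexp_eq_sum N_def L_def)
  then have "\<bar>qj\<bar> * integral {\<alpha>1..\<alpha>2} (\<lambda>t. (norm (Sexp d P qj t))\<^sup>2 / t)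
      \<le> \<bar>qj\<bar> * (N * (ln \<alpha>2 - ln \<alpha>1) + N * (1 + ln N) / (pi * L * \<bar>qj\<bar> * \<alpha>1))"
    using integral_norm_sum_ee_quadratic_sq_le[OF \<alpha> qj L(2), of N] by (simp add: mult_left_mono)
  also have "\<dots> = s * (N * s) * (ln \<alpha>2 - ln \<alpha>1) + (N * s) * (1 + ln N) / (pi * \<alpha>1 * (s * L))"
    using s L \<alpha> by (simp add: field_simps flip: s(2))
  also have "\<dots> \<le> s * (2 * real d * P) * (ln \<alpha>2 - ln \<alpha>1) + (2 * real d * P) * (1 + ln N) / (pi * \<alpha>1 * P)"
    using Ns s L \<alpha> ln_of_nat_nonneg[of N]
    by (intro add_mono mult_right_mono mult_left_mono divide_mono) auto
  finally show ?thesis by (simp add: N_def s_def mult_ac)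
qed

definition mean_square_const :: "nat \<Rightarrow> real" where
  "mean_square_const d = 2 * real d * (1 + 16 * real d * (1 + real d))"

lemma Sexp_mean_square_le:
  assumes qj: "1 \<le> \<bar>qj\<bar>" "\<bar>qj\<bar> \<le> qm" and q0: "1 \<le> q0" "q0 \<le> qm"
    and P: "sqrt qm \<le> P" "1 \<le> ln P" and d: "1 \<le> d"
  shows "\<bar>qj\<bar> * integral {1 / (8 * real d * P * sqrt qm) .. 1 / (8 * real d * P * sqrt q0)}
           (\<lambda>t. (norm (Sexp d P qj t))\<^sup>2 / t)
         \<le> mean_square_const d * P * sqrt qm * ln P"
proof -
  define \<alpha>1 where "\<alpha>1 = 1 / (8 * real d * P * sqrt qm)"
  define \<alpha>2 where "\<alpha>2 = 1 / (8 * real d * P * sqrt q0)"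
  have qj0: "qj \<noteq> 0" and s: "1 \<le> sqrt \<bar>qj\<bar>" "sqrt \<bar>qj\<bar> \<le> sqrt qm" using qj by auto
  have sqrt_q0: "1 \<le> sqrt q0" "sqrt q0 \<le> sqrt qm" using q0 by auto
  have P1: "1 \<le> P" using s P(1) by linarith
  then have P0: "0 < P" by simp
  have \<alpha>: "0 < \<alpha>1" "\<alpha>1 \<le> \<alpha>2"
    unfolding \<alpha>1_def \<alpha>2_def using sqrt_q0 P0 d by (auto intro!: divide_left_mono mult_left_mono)
  have "ln \<alpha>2 - ln \<alpha>1 = ln (sqrt qm) - ln (sqrt q0)"
    unfolding \<alpha>1_def \<alpha>2_def using P0 d sqrt_q0 by (simp add: ln_div ln_mult)
  moreover have "ln (sqrt q0) \<le> ln (sqrt qm)" "ln (sqrt qm) \<le> ln P"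
    using sqrt_q0 P(1) by (intro ln_mono; simp)+
  moreover have "0 \<le> ln (sqrt q0)" using sqrt_q0 by simp
  ultimately have "0 \<le> ln \<alpha>2 - ln \<alpha>1" "ln \<alpha>2 - ln \<alpha>1 \<le> ln P" by linarith+
  then have "sqrt \<bar>qj\<bar> * (2 * real d * P) * (ln \<alpha>2 - ln \<alpha>1) \<le> sqrt qm * (2 * real d * P) * ln P"
    using s P0 by (intro mult_mono mult_right_mono) auto
  moreover have "2 * real d * P * (1 + ln (Sexp_length d P qj)) / (pi * P * \<alpha>1)
      \<le> 2 * real d * P * (2 * (1 + real d) * ln P) * (8 * real d * sqrt qm)"
  proof -
    have "2 * real d * P * (1 + ln (Sexp_length d P qj)) / (pi * P * \<alpha>1)
        = 2 * real d * P * (1 + ln (Sexp_length d P qj)) * (8 * real d * sqrt qm) / pi"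
      unfolding \<alpha>1_def using P0 d s by (simp add: field_simps)
    also have "\<dots> \<le> 2 * real d * P * (2 * (1 + real d) * ln P) * (8 * real d * sqrt qm) / 1"
      using ln_Sexp_length_le[OF qj0 s(1) order_trans[OF s(2) P(1)] P(2) d] P1 P(2) s pi_gt3
      by (intro frac_le mult_right_mono mult_left_mono) (auto intro!: mult_nonneg_nonneg)
    finally show ?thesis by simp
  qed
  ultimately have "\<bar>qj\<bar> * integral {\<alpha>1..\<alpha>2} (\<lambda>t. (norm (Sexp d P qj t))\<^sup>2 / t)
      \<le> sqrt qm * (2 * real d * P) * ln P + 2 * real d * P * (2 * (1 + real d) * ln P) * (8 * real d * sqrt qm)"
    using Sexp_mean_square_le_length[OF qj0 order_trans[OF s(2) P(1)] \<alpha>, where d = d] by simp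
  also have "\<dots> = mean_square_const d * P * sqrt qm * ln P"
    by (simp add: mean_square_const_def algebra_simps power2_eq_square)
  finally show ?thesis by (simp add: \<alpha>1_def \<alpha>2_def)
qed

lemma prod_remove3:
  assumes "finite A" "a \<in> A" "b \<in> A" "c \<in> A" "a \<noteq> b" "a \<noteq> c" "b \<noteq> c"
  shows "prod f A = f a * (f b * f c) * prod f (A - {a, b, c})"
proof -
  have "A = insert a (insert b (insert c (A - {a, b, c})))" using assms by auto
  then have "prod f A = prod f (insert a (insert b (insert c (A - {a, b, c}))))" by simp
  also have "\<dots> = f a * (f b * f c) * prod f (A - {a, b, c})" using assms by (simp add: mult_ac)
  finally show ?thesis .
qed

lemma mult_le_weighted_squares:
  fixes x y u v :: real
  assumes "0 < u" "0 < v"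
  shows "x * y \<le> (u * x\<^sup>2 + v * y\<^sup>2) / (2 * sqrt (u * v))"
proof -
  have "2 * (sqrt u * x) * (sqrt v * y) \<le> (sqrt u * x)\<^sup>2 + (sqrt v * y)\<^sup>2"
    by (rule sum_squares_bound)
  then show ?thesis using assms by (simp add: power_mult_distrib real_sqrt_mult field_simps)
qed

lemma norm_prod_Sexp_le:
  fixes q :: "nat \<Rightarrow> real"
  assumes A: "finite A" "i0 \<in> A" "b \<in> A" "c \<in> A" "i0 \<noteq> b" "i0 \<noteq> c" "b \<noteq> c"
    and q: "\<And>j. j \<in> A \<Longrightarrow> 1 \<le> \<bar>q j\<bar>" "\<And>j. j \<in> A \<Longrightarrow> \<bar>q j\<bar> \<le> qm" and P: "sqrt qm \<le> P"
    and \<alpha>: "0 < \<alpha>" "\<alpha> \<le> 1 / (8 * real d * P * sqrt \<bar>q i0\<bar>)"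
  shows "norm (\<Prod>j\<in>A. Sexp d P (q j) \<alpha>)
    \<le> (2 * real d * P) ^ (card A - 3) / (2 * P) * (\<Prod>j\<in>A. \<bar>q j\<bar>) powr (-1/2)
       * (\<bar>q b\<bar> * (norm (Sexp d P (q b) \<alpha>))\<^sup>2 + \<bar>q c\<bar> * (norm (Sexp d P (q c) \<alpha>))\<^sup>2) / \<alpha>"
proof -
  define R where "R = A - {i0, b, c}"
  define S where "S j = norm (Sexp d P (q j) \<alpha>)" for j
  define w where "w j = 1 / sqrt \<bar>q j\<bar>" for j
  note split = prod_remove3[OF A, folded R_def]
  have card_R: "card R = card A - 3"
    using A by (simp add: R_def card_Diff_subset)
  have q0: "0 < \<bar>q j\<bar>" if "j \<in> A" for j using q(1)[OF that] by linarith
  have sqrt_le_P: "sqrt \<bar>q j\<bar> \<le> P" if "j \<in> A" for j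
    using q(2)[OF that] P real_sqrt_le_mono order_trans by blast
  have P0: "0 < P" using q(1)[OF A(2)] sqrt_le_P[OF A(2)] by (smt (verit) real_sqrt_ge_one)
  have w0: "0 \<le> w j" for j by (simp add: w_def)
  have S_i0: "S i0 \<le> w i0 / (\<alpha> * P)"
    using norm_Sexp_le_inverse[of "q i0" P \<alpha> d] q0[OF A(2)] P0 \<alpha> by (simp add: S_def w_def mult_ac)
  have S_bc: "S b * S c \<le> (\<bar>q b\<bar> * (S b)\<^sup>2 + \<bar>q c\<bar> * (S c)\<^sup>2) * (w b * w c) / 2"
    using mult_le_weighted_squares[OF q0[OF A(3)] q0[OF A(4)], of "S b" "S c"]
    by (simp add: w_def real_sqrt_mult)
  have S_R: "(\<Prod>j\<in>R. S j) \<le> (2 * real d * P) ^ (card A - 3) * (\<Prod>j\<in>R. w j)"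
  proof -
    have "(\<Prod>j\<in>R. S j) \<le> (\<Prod>j\<in>R. 2 * real d * P * w j)"
    proof (rule prod_mono)
      fix j assume "j \<in> R"
      then have "j \<in> A" by (simp add: R_def)
      then show "0 \<le> S j \<and> S j \<le> 2 * real d * P * w j"
        using norm_Sexp_le_trivial[of "q j" P d \<alpha>] q0 sqrt_le_P by (simp add: S_def w_def)
    qed
    then show ?thesis by (simp add: prod.distrib card_R)
  qed
  have "norm (\<Prod>j\<in>A. Sexp d P (q j) \<alpha>) = S i0 * (S b * S c) * (\<Prod>j\<in>R. S j)"
    unfolding S_def prod_norm[symmetric] by (rule split)
  also have "\<dots> \<le> (w i0 / (\<alpha> * P)) * ((\<bar>q b\<bar> * (S b)\<^sup>2 + \<bar>q c\<bar> * (S c)\<^sup>2) * (w b * w c) / 2)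
      * ((2 * real d * P) ^ (card A - 3) * (\<Prod>j\<in>R. w j))"
    using S_i0 S_bc S_R \<alpha>(1) P0
    by (intro mult_mono) (auto simp: S_def prod_nonneg w0 intro!: mult_nonneg_nonneg divide_nonneg_pos)
  also have "\<dots> = (2 * real d * P) ^ (card A - 3) / (2 * P) * (\<Prod>j\<in>A. w j)
      * (\<bar>q b\<bar> * (S b)\<^sup>2 + \<bar>q c\<bar> * (S c)\<^sup>2) / \<alpha>"
    unfolding split[of w] by (simp add: field_simps)
  also have "(\<Prod>j\<in>A. w j) = (\<Prod>j\<in>A. \<bar>q j\<bar>) powr (-1/2)"
    unfolding prod_powr_distrib using q0
    by (intro prod.cong refl) (simp add: w_def powr_minus_divide powr_half_sqrt)
  finally show ?thesis by (simp add: S_def)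
qed

lemma continuous_on_Sexp: "continuous_on S (Sexp d P qj)"
  unfolding Sexp_def ee_def by (intro continuous_intros)

lemma integral_norm_prod_Sexp_le:
  fixes q :: "nat \<Rightarrow> real"
  assumes A: "finite A" "i0 \<in> A" "b \<in> A" "c \<in> A" "i0 \<noteq> b" "i0 \<noteq> c" "b \<noteq> c"
    and q: "\<And>j. j \<in> A \<Longrightarrow> 1 \<le> \<bar>q j\<bar>" "\<And>j. j \<in> A \<Longrightarrow> \<bar>q j\<bar> \<le> qm"
    and P: "sqrt qm \<le> P" "1 \<le> ln P" and d: "1 \<le> d"
  shows "integral {1 / (8 * real d * P * sqrt qm) .. 1 / (8 * real d * P * sqrt \<bar>q i0\<bar>)}
           (\<lambda>\<alpha>. norm (\<Prod>j\<in>A. Sexp d P (q j) \<alpha>))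
         \<le> mean_square_const d * (2 * real d) ^ (card A - 3) * sqrt qm * (\<Prod>j\<in>A. \<bar>q j\<bar>) powr (-1/2)
            * P ^ (card A - 3) * ln P"
proof -
  define \<alpha>1 where "\<alpha>1 = 1 / (8 * real d * P * sqrt qm)"
  define \<alpha>2 where "\<alpha>2 = 1 / (8 * real d * P * sqrt \<bar>q i0\<bar>)"
  define B where "B = (2 * real d * P) ^ (card A - 3) / (2 * P) * (\<Prod>j\<in>A. \<bar>q j\<bar>) powr (-1/2)"
  define X where "X j \<alpha> = (norm (Sexp d P (q j) \<alpha>))\<^sup>2 / \<alpha>" for j \<alpha>
  have sqrt_q: "1 \<le> sqrt \<bar>q j\<bar>" "sqrt \<bar>q j\<bar> \<le> sqrt qm" if "j \<in> A" for j
    using q[OF that] by auto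
  have P0: "0 < P" using sqrt_q[OF A(2)] P(1) by linarith
  have \<alpha>1: "0 < \<alpha>1" using sqrt_q[OF A(2)] P0 d by (simp add: \<alpha>1_def)
  have pointwise: "norm (\<Prod>j\<in>A. Sexp d P (q j) \<alpha>) \<le> B * (\<bar>q b\<bar> * X b \<alpha> + \<bar>q c\<bar> * X c \<alpha>)"
    if "\<alpha> \<in> {\<alpha>1..\<alpha>2}" for \<alpha>
    using norm_prod_Sexp_le[where q = q and \<alpha> = \<alpha> and d = d, OF A q P(1)] that \<alpha>1
    by (simp add: B_def X_def \<alpha>2_def add_divide_distrib algebra_simps)
  have X_continuous: "continuous_on {\<alpha>1..\<alpha>2} (X j)" for j
    unfolding X_def using \<alpha>1 by (intro continuous_intros continuous_on_Sexp) auto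
  then have X_integrable: "X j integrable_on {\<alpha>1..\<alpha>2}" for j
    by (rule integrable_continuous_interval)
  have "integral {\<alpha>1..\<alpha>2} (\<lambda>\<alpha>. norm (\<Prod>j\<in>A. Sexp d P (q j) \<alpha>))
      \<le> integral {\<alpha>1..\<alpha>2} (\<lambda>\<alpha>. B * (\<bar>q b\<bar> * X b \<alpha> + \<bar>q c\<bar> * X c \<alpha>))"
    using pointwise
    by (intro integral_le integrable_continuous_interval continuous_intros continuous_on_Sexp X_continuous) auto
  also have "\<dots> = B * (\<bar>q b\<bar> * integral {\<alpha>1..\<alpha>2} (X b) + \<bar>q c\<bar> * integral {\<alpha>1..\<alpha>2} (X c))"
    by (intro integral_unique has_integral_mult_right has_integral_add integrable_integral X_integrable)
  also have "\<dots> \<le> B * (2 * (mean_square_const d * P * sqrt qm * ln P))"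
  proof -
    have mean_square: "\<bar>q j\<bar> * integral {\<alpha>1..\<alpha>2} (X j) \<le> mean_square_const d * P * sqrt qm * ln P"
      if "j \<in> A" for j
      unfolding X_def \<alpha>1_def \<alpha>2_def using q[OF that] q[OF A(2)] P d by (rule Sexp_mean_square_le)
    have "0 \<le> B" using P0 by (simp add: B_def)
    moreover have "\<bar>q b\<bar> * integral {\<alpha>1..\<alpha>2} (X b) + \<bar>q c\<bar> * integral {\<alpha>1..\<alpha>2} (X c)
        \<le> 2 * (mean_square_const d * P * sqrt qm * ln P)"
      using add_mono[OF mean_square[OF A(3)] mean_square[OF A(4)]] by (simp add: mult_ac)
    ultimately show ?thesis by (intro mult_left_mono)
  qed
  also have "\<dots> = mean_square_const d * (2 * real d) ^ (card A - 3) * sqrt qm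
      * (\<Prod>j\<in>A. \<bar>q j\<bar>) powr (-1/2) * P ^ (card A - 3) * ln P"
    using P0 by (simp add: B_def power_mult_distrib field_simps)
  finally show ?thesis by (simp add: \<alpha>1_def \<alpha>2_def)
qed

lemma integral_norm_prod_Sexp_Min_le:
  fixes q :: "nat \<Rightarrow> real"
  assumes A: "finite A" "3 \<le> card A"
    and q: "\<And>j. j \<in> A \<Longrightarrow> 1 \<le> \<bar>q j\<bar>" "\<And>j. j \<in> A \<Longrightarrow> \<bar>q j\<bar> \<le> qm"
    and P: "sqrt qm \<le> P" "1 \<le> ln P" and d: "1 \<le> d"
  shows "integral {1 / (8 * real d * P * sqrt qm) .. 1 / (8 * real d * P * sqrt (Min ((\<lambda>i. \<bar>q i\<bar>) ` A)))}
           (\<lambda>\<alpha>. norm (\<Prod>j\<in>A. Sexp d P (q j) \<alpha>))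
         \<le> mean_square_const d * (2 * real d) ^ (card A - 3) * sqrt qm * (\<Prod>j\<in>A. \<bar>q j\<bar>) powr (-1/2)
            * P ^ (card A - 3) * ln P"
proof -
  have "Min ((\<lambda>i. \<bar>q i\<bar>) ` A) \<in> (\<lambda>i. \<bar>q i\<bar>) ` A" using A by (intro Min_in) auto
  then obtain i0 where i0: "i0 \<in> A" "\<bar>q i0\<bar> = Min ((\<lambda>i. \<bar>q i\<bar>) ` A)" by (metis imageE)
  have "\<not> card (A - {i0}) \<le> Suc 0" using A i0(1) by simp
  then obtain b c where "b \<in> A - {i0}" "c \<in> A - {i0}" "b \<noteq> c"
    using card_le_Suc0_iff_eq[of "A - {i0}"] A(1) by blast
  then show ?thesis
    using integral_norm_prod_Sexp_le[of A i0 b c q qm P d] A(1) i0 q P d by auto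
qed

lemma card_pos_add_card_neg:
  fixes q :: "'a \<Rightarrow> real"
  assumes "finite A" "\<And>i. i \<in> A \<Longrightarrow> q i \<noteq> 0"
  shows "card {i\<in>A. q i > 0} + card {i\<in>A. q i < 0} = card A"
proof -
  have "{i\<in>A. q i > 0} \<union> {i\<in>A. q i < 0} = A" using assms(2) by fastforce
  moreover have "card ({i\<in>A. q i > 0} \<union> {i\<in>A. q i < 0}) = card {i\<in>A. q i > 0} + card {i\<in>A. q i < 0}"
    using assms(1) by (intro card_Un_disjoint) auto
  ultimately show ?thesis by simp
qed

lemma beta_exp_nonneg:
  assumes "1 \<le> r" "1 \<le> s" "3 \<le> r + s"
  shows "0 \<le> beta_exp r s"
proof -
  have "1 \<le> min r s" "3 \<le> max r s + min r s" using assms by auto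
  then show ?thesis
    unfolding beta_exp_def Let_def by (auto intro!: divide_nonneg_nonneg)
qed

lemma Ppar_ge:
  assumes "exp 1 \<le> H"
  shows "H \<le> Ppar d H" "1 \<le> ln (Ppar d H)"
proof -
  have "0 < H" using assms exp_gt_zero[of 1] by linarith
  then have lnH: "1 \<le> ln H" using assms by (simp add: ln_ge_iff)
  then have "1 \<le> 1 + 10 * real d ^ 2 / ln (ln H)" by simp
  then have "ln H \<le> (1 + 10 * real d ^ 2 / ln (ln H)) * ln H"
    using lnH by (simp add: mult_le_cancel_right1)
  moreover have "ln (Ppar d H) = (1 + 10 * real d ^ 2 / ln (ln H)) * ln H"
    by (simp add: Ppar_def)
  ultimately have "ln H \<le> ln (Ppar d H)" by simp
  then show "1 \<le> ln (Ppar d H)" using lnH by linarith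
  have "0 < Ppar d H" by (simp add: Ppar_def)
  then show "H \<le> Ppar d H"
    using \<open>ln H \<le> ln (Ppar d H)\<close> \<open>0 < H\<close> by (simp only: ln_le_cancel_iff)
qed

lemma Hpar_ge_sqrt:
  assumes "1 \<le> qm" "1 \<le> Cd" "0 \<le> \<beta>"
  shows "sqrt qm \<le> Hpar Cd qm \<beta>"
proof -
  have "sqrt qm = qm powr (1/2)" using assms by (simp add: powr_half_sqrt)
  also have "\<dots> \<le> qm powr (1/2 + \<beta>)" using assms by (intro powr_mono) auto
  also have "\<dots> \<le> Cd * qm powr (1/2 + \<beta>)" using assms by (simp add: mult_le_cancel_right1)
  finally show ?thesis by (simp add: Hpar_def)
qed

lemma exp_one_le_sqrt:
  assumes "exp (exp 1) \<le> (x :: real)"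
  shows "exp 1 \<le> sqrt x"
proof (rule real_le_rsqrt)
  have "(exp 1)\<^sup>2 = exp (2 :: real)" by (simp add: power2_eq_square flip: exp_add)
  also have "\<dots> \<le> exp (exp 1)" using exp_ge_add_one_self[of 1] by simp
  finally show "(exp 1)\<^sup>2 \<le> x" using assms by linarith
qed

lemma Ppar_Hpar_bounds:
  assumes "exp (exp 1) \<le> qm" "1 \<le> Cd" "0 \<le> \<beta>"
  shows "sqrt qm \<le> Ppar d (Hpar Cd qm \<beta>)" "1 \<le> ln (Ppar d (Hpar Cd qm \<beta>))"
proof -
  have "1 \<le> qm" by (rule order_trans[OF _ assms(1)]) simp
  then have "sqrt qm \<le> Hpar Cd qm \<beta>" using assms(2,3) by (rule Hpar_ge_sqrt)
  moreover have "exp 1 \<le> sqrt qm" using assms(1) by (rule exp_one_le_sqrt)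
  ultimately show "sqrt qm \<le> Ppar d (Hpar Cd qm \<beta>)" "1 \<le> ln (Ppar d (Hpar Cd qm \<beta>))"
    using Ppar_ge[of "Hpar Cd qm \<beta>" d] by auto
qed

theorem lemma2p6:
  fixes d :: nat and Cd :: real
  assumes "d \<ge> 5" and "Cd \<ge> 1"
  shows "\<exists>C::real. \<forall>q :: nat \<Rightarrow> real.
    (\<forall>i\<in>{1..d}. \<bar>q i\<bar> \<ge> exp (exp 1)) \<longrightarrow>
    card {i\<in>{1..d}. q i > 0} \<ge> 1 \<longrightarrow>
    card {i\<in>{1..d}. q i < 0} \<ge> 1 \<longrightarrow>
    (let r = card {i\<in>{1..d}. q i > 0};
         s = card {i\<in>{1..d}. q i < 0};
         q0 = Min ((\<lambda>i. \<bar>q i\<bar>) ` {1..d});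
         qm = Max ((\<lambda>i. \<bar>q i\<bar>) ` {1..d});
         Q = (\<Prod>i\<in>{1..d}. \<bar>q i\<bar>);
         P = Ppar d (Hpar Cd qm (beta_exp r s))
     in integral {1 / (8 * real d * P * sqrt qm) .. 1 / (8 * real d * P * sqrt q0)}
          (\<lambda>\<alpha>. norm (\<Prod>j\<in>{1..d}. Sexp d P (q j) \<alpha>))
        \<le> C * sqrt qm * Q powr (-1/2) * P ^ (d - 3) * ln P)"
proof (rule exI[of _ "mean_square_const d * (2 * real d) ^ (d - 3)"], intro allI impI,
    unfold Let_def, goal_cases)
  case (1 q)
  note big = 1(1) and pos = 1(2) and neg = 1(3)
  define qm where "qm = Max ((\<lambda>i. \<bar>q i\<bar>) ` {1..d})"
  define \<beta> where "\<beta> = beta_exp (card {i\<in>{1..d}. q i > 0}) (card {i\<in>{1..d}. q i < 0})"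
  have "(1 :: real) \<le> exp (exp 1)" by simp
  then have q_ge: "1 \<le> \<bar>q j\<bar>" if "j \<in> {1..d}" for j
    using big that by (meson order_trans)
  have q_le: "\<bar>q j\<bar> \<le> qm" if "j \<in> {1..d}" for j
    unfolding qm_def using that by (intro Max_ge) auto
  have "qm \<in> (\<lambda>i. \<bar>q i\<bar>) ` {1..d}" unfolding qm_def using assms(1) by (intro Max_in) auto
  then have "exp (exp 1) \<le> qm" using big by auto
  moreover have "0 \<le> \<beta>"
    unfolding \<beta>_def using pos neg assms(1) card_pos_add_card_neg[of "{1..d}" q] q_ge
    by (intro beta_exp_nonneg) fastforce+
  ultimately have "sqrt qm \<le> Ppar d (Hpar Cd qm \<beta>)" "1 \<le> ln (Ppar d (Hpar Cd qm \<beta>))"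
    using assms(2) by (simp_all add: Ppar_Hpar_bounds)
  then show ?case
    using integral_norm_prod_Sexp_Min_le[of "{1..d}" q qm "Ppar d (Hpar Cd qm \<beta>)" d] assms(1) q_ge q_le
    by (simp add: qm_def \<beta>_def)
qed

end
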